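(* Let $a>0$ and let $f:(a,\infty)\to\mathbb{R}$ be real analytic and not identically zero. Let $\mathcal I=\{x\in(a,\infty):f(x)=0\}$. Assume that: (1) as $x\to a$ we have $\kappa(f,x)\to\infty$, and for every sequence $x_j\in(a,\infty)$ with $x_j\to\infty$ and $\mathrm{dist}(x_j,\mathcal I)\to0$ we have $\kappa(f,x_j)\to\infty$; (2) both as $x\to a$ and as $x\to\infty$ we have $\limsup|H(f,x)|\leq C$ for some constant $C>0$, where $H(f,x)=\frac{x^2f(x)f''(x)}{f(x)^2+x^2f'(x)^2}$. The part of this hypothesis concerning $x\to a$ is automatically satisfied if $f$ admits an analytic extension to $(a-\epsilon,\infty)$ for some $\epsilon>0$. Then $f$ is amenable.
   Context: Relative distance on $\mathbb{R}$: $\mathrm{dist}(x,y)=0$ if $x=y=0$, $\mathrm{dist}(x,y)=|\log(y/x)|$ if $xy>0$, and $\mathrm{dist}(x,y)=\infty$ otherwise; for a set $S$, $\mathrm{dist}(x,S)=\inf_{s\in S}\mathrm{dist}(x,s)$. For a real analytic function $f$ on an open set $\Omega\subseteq\mathbb{R}$, not identically zero, the condition number is $\kappa(f,x)=0$ if $x=0$, $\kappa(f,x)=\infty$ if $x\neq0$ and $f(x)=0$, and $\kappa(f,x)=|x|\,|f'(x)|/|f(x)|$ otherwise; set $\mu(f,x)=1+\kappa(f,x)$. The function $f:\Omega\to\mathbb{R}$ is called amenable if there is a constant $C>0$ such that for every $x\in\Omega$ with $\kappa(f,x)<\infty$, the set $B_x=\{y\in\mathbb{R}:\mathrm{dist}(y,x)<1/(C\mu(f,x))\}$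 is contained in $\Omega$, and $\mu(f,y)\leq C\mu(f,x)$ for all $y\in B_x$. *)

theory Defs
  imports "HOL-Analysis.Analysis"
begin

definition real_analytic_on :: "(real \<Rightarrow> real) \<Rightarrow> real set \<Rightarrow> bool" where
  "real_analytic_on f S \<longleftrightarrow>
     (\<forall>x0\<in>S. \<exists>r>0. \<exists>c::nat \<Rightarrow> real.
        \<forall>x. \<bar>x - x0\<bar> < r \<longrightarrow> (\<lambda>n. c n * (x - x0) ^ n) sums f x)"

definition reldist :: "real \<Rightarrow> real \<Rightarrow> ereal" where
  "reldist x y = (if x = 0 \<and> y = 0 then 0
                  else if x * y > 0 then ereal \<bar>ln (y / x)\<bar>
                  else \<infinity>)"

definition reldist_set :: "real \<Rightarrow> real set \<Rightarrow> ereal" where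
  "reldist_set x S = (INF s\<in>S. reldist x s)"

definition kappa :: "(real \<Rightarrow> real) \<Rightarrow> real \<Rightarrow> ereal" where
  "kappa f x = (if x = 0 then 0
                else if f x = 0 then \<infinity>
                else ereal (\<bar>x\<bar> * \<bar>deriv f x\<bar> / \<bar>f x\<bar>))"

definition mu :: "(real \<Rightarrow> real) \<Rightarrow> real \<Rightarrow> ereal" where
  "mu f x = 1 + kappa f x"

definition amenable :: "(real \<Rightarrow> real) \<Rightarrow> real set \<Rightarrow> bool" where
  "amenable f \<Omega> \<longleftrightarrow>
     (\<exists>C>0. \<forall>x\<in>\<Omega>. kappa f x < \<infinity> \<longrightarrow>
        (let B = {y. reldist y x < 1 / (ereal C * mu f x)} in
           B \<subseteq> \<Omega> \<and> (\<forall>y\<in>B. mu f y \<le> ereal C * mu f x)))"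

definition Hf :: "(real \<Rightarrow> real) \<Rightarrow> real \<Rightarrow> real" where
  "Hf f x = x^2 * f x * deriv (deriv f) x / ((f x)^2 + x^2 * (deriv f x)^2)"

end

(*
  The proof works with sigma_cond f x = f x / sqrt (f x^2 + x^2 f' x^2), which is comparable to
  1 / mu f x (the product |sigma_cond f x| * mu f x lies in [1, 2]) but, unlike 1 / mu f x, is
  continuous across the zeros of f: at a zero of finite order f / f' tends to 0.  Its derivative is
  bounded by (3/2 + |H(f,x)|) / x, and H is bounded on (a, oo): near a and near oo by hypothesis,
  in between by compactness, since H is bounded near each point (at a zero of order m, f f'' / f'^2
  tends to (m - 1) / m).  Hence sigma_cond f is K-Lipschitz in ln x, and as kappa -> oo at a it
  tends to 0 there, so |sigma_cond f x| <= K (ln x - ln a).  On the relative ball of radius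
  1 / (C mu f x) around x, sigma_cond f therefore keeps at least half of its size: the ball cannot
  reach a zero of f or the point a, and mu grows by at most a factor 4 on it.
*)

theory Submission
  imports Defs
begin

section \<open>Local power series expansions\<close>

definition expands_powser :: "(nat \<Rightarrow> real) \<Rightarrow> real \<Rightarrow> real \<Rightarrow> (real \<Rightarrow> real) \<Rightarrow> bool" where
  "expands_powser c z r g \<longleftrightarrow> (\<forall>x. \<bar>x - z\<bar> < r \<longrightarrow> (\<lambda>n. c n * (x - z) ^ n) sums g x)"

lemma real_analytic_on_iff_expands_powser:
  "real_analytic_on f S \<longleftrightarrow> (\<forall>z\<in>S. \<exists>r>0. \<exists>c. expands_powser c z r f)"
  by (simp add: real_analytic_on_def expands_powser_def)

lemma expands_powser_DERIV:
  assumes g: "expands_powser c z r g" and x: "\<bar>x - z\<bar> < r"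
  shows "(g has_real_derivative (\<Sum>n. diffs c n * (x - z) ^ n)) (at x)"
proof -
  have summable: "summable (\<lambda>n. c n * w ^ n)" if "norm w < r" for w :: real
    using g[unfolded expands_powser_def, rule_format, of "w + z"] that by (simp add: sums_summable)
  have "((\<lambda>w. \<Sum>n. c n * w ^ n) has_real_derivative (\<Sum>n. diffs c n * (x - z) ^ n)) (at (x - z))"
    using x by (intro termdiffs_strong' summable) auto
  then have "((\<lambda>y. \<Sum>n. c n * (y - z) ^ n) has_real_derivative (\<Sum>n. diffs c n * (x - z) ^ n)) (at x)"
    using DERIV_shift[of _ _ x "- z"] by simp
  then show ?thesis
  proof (rule has_field_derivative_transform_within_open)
    show "open (ball z r)" "x \<in> ball z r"
      using x by (auto simp: dist_real_def abs_minus_commute)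
    show "(\<Sum>n. c n * (y - z) ^ n) = g y" if "y \<in> ball z r" for y
      using g that by (auto simp: expands_powser_def dist_real_def abs_minus_commute sums_iff)
  qed
qed

lemma expands_powser_has_deriv:
  assumes "expands_powser c z r g" "\<bar>x - z\<bar> < r"
  shows "(g has_real_derivative deriv g x) (at x)"
  using expands_powser_DERIV[OF assms] by (simp add: DERIV_imp_deriv)

lemma expands_powser_deriv:
  assumes g: "expands_powser c z r g"
  shows "expands_powser (diffs c) z r (deriv g)"
  unfolding expands_powser_def
proof (intro allI impI)
  fix x assume x: "\<bar>x - z\<bar> < r"
  have "summable (\<lambda>n. diffs c n * (x - z) ^ n)"
  proof (rule termdiff_converges)
    show "norm (x - z) < (\<bar>x - z\<bar> + r) / 2" using x by simp
    show "summable (\<lambda>n. c n * w ^ n)" if "norm w < (\<bar>x - z\<bar> + r) / 2" for w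
      using g[unfolded expands_powser_def, rule_format, of "w + z"] that x
      by (simp add: sums_summable)
  qed
  then show "(\<lambda>n. diffs c n * (x - z) ^ n) sums deriv g x"
    using DERIV_imp_deriv[OF expands_powser_DERIV[OF g x]] by (simp add: summable_sums)
qed

lemma real_analytic_on_has_deriv:
  assumes "real_analytic_on f S" "x \<in> S"
  shows "(f has_real_derivative deriv f x) (at x)"
proof -
  obtain r c where "r > 0" "expands_powser c x r f"
    using assms unfolding real_analytic_on_iff_expands_powser by blast
  then show ?thesis using expands_powser_has_deriv[of c x r f x] by simp
qed

lemma real_analytic_on_deriv: "real_analytic_on f S \<Longrightarrow> real_analytic_on (deriv f) S"
  unfolding real_analytic_on_iff_expands_powser by (blast intro: expands_powser_deriv)

lemma real_analytic_on_isCont: "real_analytic_on f S \<Longrightarrow> x \<in> S \<Longrightarrow> isCont f x"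
  using real_analytic_on_has_deriv DERIV_isCont by blast

lemma expands_powser_factor_power:
  assumes f: "expands_powser c z r f" and below: "\<forall>n<m. c n = 0"
  obtains g where "expands_powser (\<lambda>n. c (n + m)) z r g" "g z = c m"
    "\<And>x. \<bar>x - z\<bar> < r \<Longrightarrow> f x = (x - z) ^ m * g x"
proof -
  define g where "g x = (if x = z then c m else f x / (x - z) ^ m)" for x
  have fz: "f z = (if m = 0 then c 0 else 0)" if "0 < r"
    using f[unfolded expands_powser_def, rule_format, of z] that below by auto
  have "expands_powser (\<lambda>n. c (n + m)) z r g"
    unfolding expands_powser_def
  proof (intro allI impI)
    fix x assume x: "\<bar>x - z\<bar> < r"
    show "(\<lambda>n. c (n + m) * (x - z) ^ n) sums g x"
    proof (cases "x = z")
      case True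
      then show ?thesis using powser_sums_zero[of "\<lambda>n. c (n + m)"] by (simp add: g_def)
    next
      case False
      have "(\<lambda>n. c (n + m) * (x - z) ^ (n + m)) sums f x"
        using f x below sums_zero_iff_shift[of m "\<lambda>n. c n * (x - z) ^ n"]
        by (simp add: expands_powser_def)
      then have "(\<lambda>n. (x - z) ^ m * (c (n + m) * (x - z) ^ n)) sums f x"
        by (simp add: power_add algebra_simps)
      then show ?thesis using False by (simp add: g_def sums_mult_D)
    qed
  qed
  moreover have "f x = (x - z) ^ m * g x" if "\<bar>x - z\<bar> < r" for x
    using fz that by (cases "x = z") (auto simp: g_def)
  ultimately show ?thesis using that by (simp add: g_def)
qed

section \<open>Zeros of real analytic functions\<close>

lemma deriv_power_mult:
  fixes f g :: "real \<Rightarrow> real"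
  assumes f: "\<And>y. y \<in> ball z r \<Longrightarrow> f y = (y - z) ^ Suc k * g y"
    and g1: "\<And>y. y \<in> ball z r \<Longrightarrow> (g has_real_derivative deriv g y) (at y)"
    and g2: "\<And>y. y \<in> ball z r \<Longrightarrow> (deriv g has_real_derivative deriv (deriv g) y) (at y)"
    and x: "x \<in> ball z r"
  shows "deriv f x = (x - z) ^ k * (Suc k * g x + (x - z) * deriv g x)"
    \<comment> \<open>multiplied by \<open>x - z\<close> so that no exponent \<open>k - 1\<close> occurs\<close>
    and "(x - z) * deriv (deriv f) x = (x - z) ^ k * (k * (Suc k * g x + (x - z) * deriv g x)
           + (x - z) * ((real k + 2) * deriv g x + (x - z) * deriv (deriv g) x))"
proof -
  define V where "V y = Suc k * g y + (y - z) * deriv g y" for y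
  define V' where "V' y = (real k + 2) * deriv g y + (y - z) * deriv (deriv g) y" for y
  have df: "deriv f y = (y - z) ^ k * V y" if y: "y \<in> ball z r" for y
  proof -
    have "((\<lambda>y. (y - z) ^ Suc k * g y) has_real_derivative (y - z) ^ k * V y) (at y)"
      using g1[OF y] unfolding V_def
      by (auto intro!: derivative_eq_intros) (cases k; simp add: algebra_simps)
    then have "(f has_real_derivative (y - z) ^ k * V y) (at y)"
      by (rule has_field_derivative_transform_within_open[OF _ open_ball y]) (simp add: f)
    then show ?thesis by (rule DERIV_imp_deriv)
  qed
  then show "deriv f x = (x - z) ^ k * (Suc k * g x + (x - z) * deriv g x)"
    using x by (simp add: V_def)
  have "((\<lambda>y. (y - z) ^ k * V y) has_real_derivative
          k * (x - z) ^ (k - 1) * V x + (x - z) ^ k * V' x) (at x)"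
    using g1[OF x] g2[OF x] unfolding V_def V'_def
    by (auto intro!: derivative_eq_intros simp: algebra_simps)
  then have "(deriv f has_real_derivative k * (x - z) ^ (k - 1) * V x + (x - z) ^ k * V' x) (at x)"
    by (rule has_field_derivative_transform_within_open[OF _ open_ball x]) (simp add: df)
  then have "deriv (deriv f) x = k * (x - z) ^ (k - 1) * V x + (x - z) ^ k * V' x"
    by (rule DERIV_imp_deriv)
  moreover have "w * D = w ^ k * (k * A + w * B)" if "D = k * w ^ (k - 1) * A + w ^ k * B"
    for w D A B :: real
    using that by (cases k) (simp_all add: algebra_simps)
  ultimately have "(x - z) * deriv (deriv f) x = (x - z) ^ k * (k * V x + (x - z) * V' x)"
    by blast
  then show "(x - z) * deriv (deriv f) x = (x - z) ^ k * (k * (Suc k * g x + (x - z) * deriv g x)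
           + (x - z) * ((real k + 2) * deriv g x + (x - z) * deriv (deriv g) x))"
    by (simp only: V_def V'_def)
qed

lemma finite_order_zero_ratio_form:
  fixes f g :: "real \<Rightarrow> real"
  assumes r: "r > 0"
    and f: "\<And>y. y \<in> ball z r \<Longrightarrow> f y = (y - z) ^ Suc k * g y"
    and g1: "\<And>y. y \<in> ball z r \<Longrightarrow> (g has_real_derivative deriv g y) (at y)"
    and g2: "\<And>y. y \<in> ball z r \<Longrightarrow> (deriv g has_real_derivative deriv (deriv g) y) (at y)"
    and g2_cont: "isCont (deriv (deriv g)) z" and gz: "g z \<noteq> 0"
  obtains R q where "isCont R z" "(q \<longlongrightarrow> 0) (at z)"
    "\<forall>\<^sub>F y in nhds z. f y * deriv (deriv f) y = R y * (deriv f y)\<^sup>2"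
    "\<forall>\<^sub>F y in at z. f y \<noteq> 0 \<and> deriv f y \<noteq> 0 \<and> f y = q y * deriv f y"
proof -
  define V where "V y = Suc k * g y + (y - z) * deriv g y" for y
  define W where
    "W y = k * V y + (y - z) * ((real k + 2) * deriv g y + (y - z) * deriv (deriv g) y)" for y
  define R where "R y = g y * W y / (V y)\<^sup>2" for y
  define q where "q y = (y - z) * g y / V y" for y
  have z: "z \<in> ball z r" using r by simp
  have df: "deriv f y = (y - z) ^ k * V y"
    and ddf: "(y - z) * deriv (deriv f) y = (y - z) ^ k * W y" if "y \<in> ball z r" for y
    using deriv_power_mult[OF f g1 g2 that] by (simp_all add: V_def W_def)
  have "isCont g z" "isCont (deriv g) z"
    using g1[OF z] g2[OF z] by (simp_all add: DERIV_isCont)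
  then have cV: "isCont V z" and "isCont W z"
    using g2_cont unfolding V_def W_def by (auto intro!: continuous_intros)
  have Vz: "V z \<noteq> 0" using gz by (simp add: V_def)
  have "isCont R z" and cq: "isCont q z"
    using \<open>isCont g z\<close> cV \<open>isCont W z\<close> Vz unfolding R_def q_def by (auto intro!: continuous_intros)
  have "(q \<longlongrightarrow> 0) (at z)"
    using cq by (simp add: isCont_def q_def)
  have ident: "f y * deriv (deriv f) y = R y * (deriv f y)\<^sup>2 \<and> f y = q y * deriv f y"
    if "y \<in> ball z r" "V y \<noteq> 0" for y
  proof -
    have "f y * deriv (deriv f) y = (y - z) ^ k * g y * ((y - z) * deriv (deriv f) y)"
      by (simp add: f[OF that(1)] mult_ac)
    also have "\<dots> = (y - z) ^ k * g y * ((y - z) ^ k * W y)"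
      by (simp only: ddf[OF that(1)])
    also have "\<dots> = R y * (deriv f y)\<^sup>2"
      using that(2) by (simp add: df[OF that(1)] R_def power2_eq_square)
    finally show ?thesis
      using that(2) by (simp add: f[OF that(1)] df[OF that(1)] q_def)
  qed
  have "\<forall>\<^sub>F y in nhds z. y \<in> ball z r \<and> V y \<noteq> 0 \<and> g y \<noteq> 0"
  proof -
    have "(V \<longlongrightarrow> V z) (nhds z)" and "(g \<longlongrightarrow> g z) (nhds z)"
      using cV \<open>isCont g z\<close> by (simp_all add: isCont_def tendsto_at_iff_tendsto_nhds)
    from eventually_nhds_in_open[OF open_ball z] tendsto_imp_eventually_ne[OF this(1) Vz]
      tendsto_imp_eventually_ne[OF this(2) gz]
    show ?thesis by eventually_elim simp
  qed
  then have ev: "\<forall>\<^sub>F y in nhds z. f y * deriv (deriv f) y = R y * (deriv f y)\<^sup>2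
      \<and> f y = q y * deriv f y \<and> (y \<noteq> z \<longrightarrow> f y \<noteq> 0 \<and> deriv f y \<noteq> 0)"
  proof (rule eventually_mono)
    fix y assume y: "y \<in> ball z r \<and> V y \<noteq> 0 \<and> g y \<noteq> 0"
    then have "y \<noteq> z \<longrightarrow> f y \<noteq> 0 \<and> deriv f y \<noteq> 0"
      by (simp add: f df)
    with ident y show "f y * deriv (deriv f) y = R y * (deriv f y)\<^sup>2
      \<and> f y = q y * deriv f y \<and> (y \<noteq> z \<longrightarrow> f y \<noteq> 0 \<and> deriv f y \<noteq> 0)"
      by blast
  qed
  show ?thesis
  proof (rule that)
    show "isCont R z" "(q \<longlongrightarrow> 0) (at z)" by fact+
    show "\<forall>\<^sub>F y in nhds z. f y * deriv (deriv f) y = R y * (deriv f y)\<^sup>2"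
      using ev by (rule eventually_mono) blast
    show "\<forall>\<^sub>F y in at z. f y \<noteq> 0 \<and> deriv f y \<noteq> 0 \<and> f y = q y * deriv f y"
      using ev unfolding eventually_at_filter by (rule eventually_mono) blast
  qed
qed

lemma finite_order_zero_local_behaviour:
  fixes f g :: "real \<Rightarrow> real"
  assumes "r > 0"
    and "\<And>y. y \<in> ball z r \<Longrightarrow> f y = (y - z) ^ Suc k * g y"
    and "\<And>y. y \<in> ball z r \<Longrightarrow> (g has_real_derivative deriv g y) (at y)"
    and "\<And>y. y \<in> ball z r \<Longrightarrow> (deriv g has_real_derivative deriv (deriv g) y) (at y)"
    and "isCont (deriv (deriv g)) z" and "g z \<noteq> 0"
  shows "\<exists>B. \<forall>\<^sub>F x in nhds z. \<bar>f x * deriv (deriv f) x\<bar> \<le> B * (deriv f x)\<^sup>2"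
    and "((\<lambda>x. f x / deriv f x) \<longlongrightarrow> 0) (at z)"
    and "\<forall>\<^sub>F x in at z. f x \<noteq> 0 \<and> deriv f x \<noteq> 0"
proof -
  obtain R q where R: "isCont R z" and q: "(q \<longlongrightarrow> 0) (at z)"
    and ratio: "\<forall>\<^sub>F y in nhds z. f y * deriv (deriv f) y = R y * (deriv f y)\<^sup>2"
    and quot: "\<forall>\<^sub>F y in at z. f y \<noteq> 0 \<and> deriv f y \<noteq> 0 \<and> f y = q y * deriv f y"
    by (rule finite_order_zero_ratio_form[OF assms])
  have "(R \<longlongrightarrow> R z) (nhds z)"
    using R by (simp add: isCont_def tendsto_at_iff_tendsto_nhds)
  from order_tendstoD(2)[OF tendsto_rabs[OF this] less_add_one] ratio
  have "\<forall>\<^sub>F y in nhds z. \<bar>f y * deriv (deriv f) y\<bar> \<le> (\<bar>R z\<bar> + 1) * (deriv f y)\<^sup>2"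
    by eventually_elim (simp add: abs_mult mult_right_mono)
  then show "\<exists>B. \<forall>\<^sub>F x in nhds z. \<bar>f x * deriv (deriv f) x\<bar> \<le> B * (deriv f x)\<^sup>2" ..
  show "((\<lambda>x. f x / deriv f x) \<longlongrightarrow> 0) (at z)"
    using q by (rule Lim_transform_eventually)
      (use quot in \<open>elim eventually_mono, metis nonzero_mult_div_cancel_right\<close>)
  show "\<forall>\<^sub>F x in at z. f x \<noteq> 0 \<and> deriv f x \<noteq> 0"
    using quot by (rule eventually_mono) blast
qed

lemma expands_powser_zero_finite_order:
  assumes c: "expands_powser c z r f" and r: "r > 0" and fz: "f z = 0"
    and not_flat: "\<not> (\<forall>\<^sub>F x in nhds z. f x = 0)"
  obtains k g where "expands_powser (\<lambda>n. c (n + Suc k)) z r g" "g z \<noteq> 0"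
    "\<And>x. \<bar>x - z\<bar> < r \<Longrightarrow> f x = (x - z) ^ Suc k * g x"
proof -
  have "\<exists>n. c n \<noteq> 0"
  proof (rule ccontr)
    assume "\<not> (\<exists>n. c n \<noteq> 0)"
    have zero: "f y = 0" if "y \<in> ball z r" for y
    proof -
      have "(\<lambda>n. c n * (y - z) ^ n) sums f y"
        using c that by (simp add: expands_powser_def dist_real_def abs_minus_commute)
      then have "(\<lambda>n. 0) sums f y"
        using \<open>\<not> (\<exists>n. c n \<noteq> 0)\<close> by simp
      then show ?thesis
        using sums_unique2 sums_zero by blast
    qed
    have "\<forall>\<^sub>F x in nhds z. f x = 0"
      using eventually_nhds_ball[OF r, of z] by (rule eventually_mono) (rule zero)
    with not_flat show False ..
  qed
  define m where "m = (LEAST n. c n \<noteq> 0)"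
  have cm: "c m \<noteq> 0"
    unfolding m_def using \<open>\<exists>n. c n \<noteq> 0\<close> by (rule LeastI_ex)
  have below: "\<forall>n<m. c n = 0"
    unfolding m_def using not_less_Least by auto
  have "c 0 = f z"
    using c[unfolded expands_powser_def, rule_format, of z] r by simp
  then obtain k where k: "m = Suc k"
    using cm fz by (cases m) auto
  obtain g where "expands_powser (\<lambda>n. c (n + m)) z r g" "g z = c m"
    "\<And>x. \<bar>x - z\<bar> < r \<Longrightarrow> f x = (x - z) ^ m * g x"
    using expands_powser_factor_power[OF c below] by blast
  with k cm show ?thesis
    by (intro that[of k g]) auto
qed

lemma real_analytic_on_zero_local_behaviour:
  assumes f: "real_analytic_on f S" and z: "z \<in> S" and fz: "f z = 0"
    and not_flat: "\<not> (\<forall>\<^sub>F x in nhds z. f x = 0)"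
  shows "\<exists>B. \<forall>\<^sub>F x in nhds z. \<bar>f x * deriv (deriv f) x\<bar> \<le> B * (deriv f x)\<^sup>2"
    and "((\<lambda>x. f x / deriv f x) \<longlongrightarrow> 0) (at z)"
    and "\<forall>\<^sub>F x in at z. f x \<noteq> 0 \<and> deriv f x \<noteq> 0"
proof -
  obtain r c where r: "r > 0" and c: "expands_powser c z r f"
    using f z unfolding real_analytic_on_iff_expands_powser by blast
  obtain k g where g: "expands_powser (\<lambda>n. c (n + Suc k)) z r g" and gz: "g z \<noteq> 0"
    and fg: "\<And>x. \<bar>x - z\<bar> < r \<Longrightarrow> f x = (x - z) ^ Suc k * g x"
    using expands_powser_zero_finite_order[OF c r fz not_flat] by blast
  have in_ball: "y \<in> ball z r \<longleftrightarrow> \<bar>y - z\<bar> < r" for y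
    by (simp add: dist_real_def abs_minus_commute)
  note g' = expands_powser_deriv[OF g] and g'' = expands_powser_deriv[OF expands_powser_deriv[OF g]]
  have "isCont (deriv (deriv g)) z"
    using expands_powser_has_deriv[OF g'', of z] r by (simp add: DERIV_isCont)
  with r gz fg expands_powser_has_deriv[OF g] expands_powser_has_deriv[OF g']
  show "\<exists>B. \<forall>\<^sub>F x in nhds z. \<bar>f x * deriv (deriv f) x\<bar> \<le> B * (deriv f x)\<^sup>2"
    and "((\<lambda>x. f x / deriv f x) \<longlongrightarrow> 0) (at z)"
    and "\<forall>\<^sub>F x in at z. f x \<noteq> 0 \<and> deriv f x \<noteq> 0"
    using finite_order_zero_local_behaviour[of r z f k g] unfolding in_ball by blast+
qed

lemma real_analytic_on_zeros_dichotomy: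
  assumes f: "real_analytic_on f S" and x: "x \<in> S"
  shows "(\<forall>\<^sub>F y in nhds x. f y = 0) \<or> (\<forall>\<^sub>F y in at x. f y \<noteq> 0)"
proof (cases "f x = 0")
  case True
  show ?thesis
  proof (cases "\<forall>\<^sub>F y in nhds x. f y = 0")
    case False
    with real_analytic_on_zero_local_behaviour(3)[OF f x True] show ?thesis
      by (auto elim: eventually_mono)
  qed simp
next
  case False
  have "f \<midarrow>x\<rightarrow> f x"
    using real_analytic_on_isCont[OF f x] by (simp add: isCont_def)
  then show ?thesis
    using tendsto_imp_eventually_ne[OF _ False] by blast
qed

lemma real_analytic_on_not_locally_zero:
  assumes f: "real_analytic_on f S" and S: "connected S"
    and x0: "x0 \<in> S" "f x0 \<noteq> 0" and z: "z \<in> S"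
  shows "\<not> (\<forall>\<^sub>F x in nhds z. f x = 0)"
proof -
  define U where "U = {x. \<forall>\<^sub>F y in nhds x. f y = 0}"
  have U_zero: "f x = 0" if "x \<in> U" for x
    using that by (auto simp: U_def dest: eventually_nhds_x_imp_x)
  have "open U"
    unfolding U_def by (subst open_subopen) (auto simp: eventually_nhds)
  moreover have "open (- closure U)"
    by (simp add: open_Compl)
  moreover have "U \<inter> - closure U \<inter> S = {}"
    using closure_subset by blast
  moreover have "S \<subseteq> U \<union> - closure U"
  proof
    fix x assume "x \<in> S"
    show "x \<in> U \<union> - closure U"
    proof (cases "x \<in> U")
      case False
      with real_analytic_on_zeros_dichotomy[OF f \<open>x \<in> S\<close>]
      have "\<forall>\<^sub>F y in at x. f y \<noteq> 0" by (auto simp: U_def)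
      then obtain T where "open T" "x \<in> T" "\<forall>y\<in>T. y \<noteq> x \<longrightarrow> f y \<noteq> 0"
        unfolding eventually_at_topological by blast
      then have "T \<inter> U = {}"
        using False U_zero by auto
      then have "T \<inter> closure U = {}"
        using open_Int_closure_eq_empty[OF \<open>open T\<close>] by simp
      then have "x \<notin> closure U"
        using \<open>x \<in> T\<close> by auto
      then show ?thesis by blast
    qed simp
  qed
  ultimately have "U \<inter> S = {} \<or> - closure U \<inter> S = {}"
    by (rule connectedD[OF S])
  moreover have "x0 \<in> - closure U \<inter> S"
    using \<open>S \<subseteq> U \<union> - closure U\<close> x0 U_zero by blast
  ultimately show ?thesis
    using z by (auto simp: U_def)
qed

lemma bounded_on_compact_if_locally_bounded:
  fixes h :: "'a::topological_space \<Rightarrow> real"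
  assumes K: "compact K" and local: "\<And>z. z \<in> K \<Longrightarrow> \<exists>B. \<forall>\<^sub>F x in nhds z. \<bar>h x\<bar> \<le> B"
  shows "\<exists>B. \<forall>x\<in>K. \<bar>h x\<bar> \<le> B"
proof -
  have "\<forall>z\<in>K. \<exists>B U. open U \<and> z \<in> U \<and> (\<forall>x\<in>U. \<bar>h x\<bar> \<le> B)"
    using local by (simp add: eventually_nhds)
  then obtain B U where BU: "\<And>z. z \<in> K \<Longrightarrow> open (U z) \<and> z \<in> U z \<and> (\<forall>x\<in>U z. \<bar>h x\<bar> \<le> B z)"
    by metis
  then have "K \<subseteq> (\<Union>z\<in>K. U z)" by blast
  then obtain T where T: "T \<subseteq> K" "finite T" "K \<subseteq> (\<Union>z\<in>T. U z)"
    using compactE_image[OF K, of K U] BU by metis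
  have "\<bar>h x\<bar> \<le> Max (insert 0 (B ` T))" if x: "x \<in> K" for x
  proof -
    obtain z where "z \<in> T" "x \<in> U z" using T(3) x by blast
    then have "\<bar>h x\<bar> \<le> B z" using BU T(1) by blast
    also have "\<dots> \<le> Max (insert 0 (B ` T))" using T(2) \<open>z \<in> T\<close> by simp
    finally show ?thesis .
  qed
  then show ?thesis by blast
qed

lemma bounded_on_Ioi_if_locally_bounded:
  fixes h :: "real \<Rightarrow> real"
  assumes local: "\<And>z. z > a \<Longrightarrow> \<exists>B. \<forall>\<^sub>F x in nhds z. \<bar>h x\<bar> \<le> B"
    and left: "Limsup (at_right a) (\<lambda>x. ereal \<bar>h x\<bar>) \<le> ereal C"
    and right: "Limsup at_top (\<lambda>x. ereal \<bar>h x\<bar>) \<le> ereal C"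
  shows "\<exists>M. \<forall>x>a. \<bar>h x\<bar> \<le> M"
proof -
  have "\<forall>\<^sub>F x in at_right a. ereal \<bar>h x\<bar> < ereal (C + 1)"
    by (intro Limsup_lessD le_less_trans[OF left]) simp
  then obtain b where b: "b > a" "\<And>x. a < x \<Longrightarrow> x < b \<Longrightarrow> \<bar>h x\<bar> < C + 1"
    unfolding eventually_at_right_field by auto
  have "\<forall>\<^sub>F x in at_top. ereal \<bar>h x\<bar> < ereal (C + 1)"
    by (intro Limsup_lessD le_less_trans[OF right]) simp
  then obtain R where R: "\<And>x. x \<ge> R \<Longrightarrow> \<bar>h x\<bar> < C + 1"
    unfolding eventually_at_top_linorder by auto
  obtain B where B: "\<And>x. x \<in> {b..R} \<Longrightarrow> \<bar>h x\<bar> \<le> B"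
    using bounded_on_compact_if_locally_bounded[of "{b..R}" h] local b(1) by force
  have "\<bar>h x\<bar> \<le> max (C + 1) B" if x: "x > a" for x
  proof (cases "x < b")
    case True
    then show ?thesis using b(2)[OF x] by simp
  next
    case False
    then show ?thesis using R[of x] B[of x] by (cases "x \<ge> R") auto
  qed
  then show ?thesis by blast
qed

lemma abs_diff_le_ln_ratio_if_deriv_bound:
  fixes g g' :: "real \<Rightarrow> real"
  assumes "0 < s" "s \<le> t" "finite E" "continuous_on {s..t} g"
    and "\<And>x. x \<in> {s..t} - E \<Longrightarrow> (g has_real_derivative g' x) (at x)"
    and "\<And>x. x \<in> {s..t} \<Longrightarrow> \<bar>g' x\<bar> \<le> K / x"
  shows "\<bar>g t - g s\<bar> \<le> K * (ln t - ln s)"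
proof -
  have g': "(g' has_integral (g t - g s)) {s..t}"
    by (rule fundamental_theorem_of_calculus_strong[OF assms(3,2) _ assms(4)])
       (simp add: has_real_derivative_iff_has_vector_derivative[symmetric] assms(5))
  have "((\<lambda>x. K / x) has_integral (K * ln t - K * ln s)) {s..t}"
  proof (rule fundamental_theorem_of_calculus[OF assms(2)])
    fix x assume "x \<in> {s..t}"
    then have "x > 0" using assms(1) by auto
    then have "((\<lambda>x. K * ln x) has_real_derivative K * (1 / x)) (at x within {s..t})"
      by (auto intro!: derivative_eq_intros)
    then show "((\<lambda>x. K * ln x) has_vector_derivative K / x) (at x within {s..t})"
      by (simp add: has_real_derivative_iff_has_vector_derivative[symmetric])
  qed
  from has_integral_le[OF g' this] has_integral_le[OF has_integral_neg[OF g'] this] assms(6)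
  show ?thesis
    by (force simp: algebra_simps abs_le_iff)
qed

definition sigma_cond :: "(real \<Rightarrow> real) \<Rightarrow> real \<Rightarrow> real" where
  "sigma_cond f x = f x / sqrt ((f x)\<^sup>2 + x\<^sup>2 * (deriv f x)\<^sup>2)"

lemma mu_eq_real:
  assumes "x \<noteq> 0" "f x \<noteq> 0"
  shows "mu f x = ereal (1 + \<bar>x\<bar> * \<bar>deriv f x\<bar> / \<bar>f x\<bar>)"
  using assms by (simp add: mu_def kappa_def)

lemma sigma_cond_mu_bounds:
  assumes "x \<noteq> 0" "f x \<noteq> 0"
  shows "1 \<le> \<bar>sigma_cond f x\<bar> * (1 + \<bar>x\<bar> * \<bar>deriv f x\<bar> / \<bar>f x\<bar>)"
    and "\<bar>sigma_cond f x\<bar> * (1 + \<bar>x\<bar> * \<bar>deriv f x\<bar> / \<bar>f x\<bar>) \<le> 2"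
proof -
  define A where "A = \<bar>f x\<bar>"
  define u where "u = \<bar>x\<bar> * \<bar>deriv f x\<bar>"
  define S where "S = sqrt (A\<^sup>2 + u\<^sup>2)"
  have A: "A > 0" and u: "u \<ge> 0" using assms by (simp_all add: A_def u_def)
  have S: "S > 0" using A by (simp add: S_def add_pos_nonneg)
  have eq: "\<bar>sigma_cond f x\<bar> * (1 + \<bar>x\<bar> * \<bar>deriv f x\<bar> / \<bar>f x\<bar>) = (A + u) / S"
    using A S unfolding sigma_cond_def S_def A_def u_def
    by (simp add: abs_divide power_mult_distrib field_simps)
  have "(A + u)\<^sup>2 \<le> 2 * (A\<^sup>2 + u\<^sup>2)"
    using sum_squares_bound[of A u] by (simp add: power2_sum)
  also have "\<dots> \<le> 4 * (A\<^sup>2 + u\<^sup>2)"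
    by (intro mult_right_mono) simp_all
  also have "\<dots> = (2 * S)\<^sup>2"
    by (simp add: S_def power_mult_distrib)
  finally have "A + u \<le> 2 * S"
    by (rule power2_le_imp_le) (use S in simp)
  moreover have "S \<le> A + u"
    unfolding S_def using A u
    by (intro real_le_lsqrt) (simp_all add: power2_eq_square algebra_simps)
  ultimately show "1 \<le> \<bar>sigma_cond f x\<bar> * (1 + \<bar>x\<bar> * \<bar>deriv f x\<bar> / \<bar>f x\<bar>)"
    and "\<bar>sigma_cond f x\<bar> * (1 + \<bar>x\<bar> * \<bar>deriv f x\<bar> / \<bar>f x\<bar>) \<le> 2"
    unfolding eq using S by (simp_all add: field_simps)
qed

definition sigma_cond_deriv :: "(real \<Rightarrow> real) \<Rightarrow> real \<Rightarrow> real" where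
  "sigma_cond_deriv f x =
     (let A = f x; B = deriv f x; C = deriv (deriv f) x; Q = A\<^sup>2 + x\<^sup>2 * B\<^sup>2
      in x * B * (x * B\<^sup>2 - A * B - x * A * C) / (Q * sqrt Q))"

lemma sigma_cond_has_deriv:
  assumes fx: "f x \<noteq> 0"
    and f1: "(f has_real_derivative deriv f x) (at x)"
    and f2: "(deriv f has_real_derivative deriv (deriv f) x) (at x)"
  shows "(sigma_cond f has_real_derivative sigma_cond_deriv f x) (at x)"
proof -
  define A B C where "A = f x" and "B = deriv f x" and "C = deriv (deriv f) x"
  define Q where "Q = A\<^sup>2 + x\<^sup>2 * B\<^sup>2"
  define Q' where "Q' = 2 * A * B + 2 * x * B\<^sup>2 + 2 * x\<^sup>2 * B * C"
  have Q: "Q > 0" using fx by (simp add: Q_def A_def add_pos_nonneg)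
  define S where "S = sqrt Q"
  have S: "S > 0" "S * S = Q" "S\<^sup>2 = Q" using Q by (simp_all add: S_def)
  have "((\<lambda>y. (f y)\<^sup>2 + y\<^sup>2 * (deriv f y)\<^sup>2) has_real_derivative Q') (at x)"
    using f1 f2 unfolding Q'_def A_def B_def C_def
    by (auto intro!: derivative_eq_intros simp: algebra_simps power2_eq_square)
  from DERIV_chain2[OF DERIV_real_sqrt this] Q
  have "((\<lambda>y. sqrt ((f y)\<^sup>2 + y\<^sup>2 * (deriv f y)\<^sup>2)) has_real_derivative inverse S / 2 * Q') (at x)"
    by (simp add: S_def Q_def A_def B_def)
  from DERIV_divide[OF f1 this] S(1)
  have dsig:
    "(sigma_cond f has_real_derivative (B * S - A * (inverse S / 2 * Q')) / (S * S)) (at x)"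
    unfolding sigma_cond_def[abs_def] by (simp add: S_def Q_def A_def B_def)
  have "(B * S - A * (inverse S / 2 * Q')) / (S * S) = (2 * B * Q - A * Q') / (2 * (Q * S))"
    using S(1) by (simp add: S(2)[symmetric] field_simps)
  also have "2 * B * Q - A * Q' = 2 * (x * B * (x * B\<^sup>2 - A * B - x * A * C))"
    by (simp add: Q_def Q'_def power2_eq_square algebra_simps)
  finally show ?thesis
    using dsig by (simp add: sigma_cond_deriv_def Let_def A_def B_def C_def Q_def S_def)
qed

lemma abs_sigma_cond_deriv_le:
  assumes x: "x > 0"
  shows "\<bar>sigma_cond_deriv f x\<bar> \<le> (3 / 2 + \<bar>Hf f x\<bar>) / x"
proof -
  define A B C where "A = f x" and "B = deriv f x" and "C = deriv (deriv f) x"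
  define Q where "Q = A\<^sup>2 + x\<^sup>2 * B\<^sup>2"
  define u where "u = x * B"
  define W where "W = x\<^sup>2 * A * C"
  have Hf: "Hf f x = W / Q" by (simp add: Hf_def Q_def W_def A_def B_def C_def)
  have Qu: "Q = A\<^sup>2 + u\<^sup>2" by (simp add: Q_def u_def power_mult_distrib)
  have rhs: "(3 / 2 + \<bar>Hf f x\<bar>) / x \<ge> 0" using x by simp
  show ?thesis
  proof (cases "Q = 0")
    case True
    then show ?thesis using rhs by (simp add: sigma_cond_deriv_def Let_def Q_def A_def B_def C_def)
  next
    case False
    then have Q: "Q > 0" using Qu by (simp add: add_nonneg_nonneg order_le_neq_trans)
    \<comment> \<open>\<open>|u| \<le> sqrt Q\<close>, \<open>|A u| \<le> Q / 2\<close> and \<open>|W| = |H| Q\<close> bound the three terms\<close>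
    have "u * (u\<^sup>2 - A * u - W) = x * (x * B * (x * B\<^sup>2 - A * B - x * A * C))"
      by (simp add: u_def W_def power2_eq_square algebra_simps)
    then have eq: "sigma_cond_deriv f x = u * (u\<^sup>2 - A * u - W) / (Q * sqrt Q) / x"
      using x by (simp add: sigma_cond_deriv_def Let_def Q_def A_def B_def C_def)
    have "\<bar>u\<bar> \<le> sqrt Q" using Qu by (intro real_le_rsqrt) simp
    moreover have "\<bar>u\<^sup>2 - A * u - W\<bar> \<le> (3 / 2 + \<bar>Hf f x\<bar>) * Q"
    proof -
      have "\<bar>A * u\<bar> \<le> Q / 2"
        using sum_squares_bound[of "\<bar>A\<bar>" "\<bar>u\<bar>"] Qu by (simp add: abs_mult)
      then have "A * u \<le> Q / 2" "- (A * u) \<le> Q / 2" by linarith+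
      have "\<bar>W\<bar> = \<bar>Hf f x\<bar> * Q" using Q by (simp add: Hf abs_divide)
      then have "W \<le> \<bar>Hf f x\<bar> * Q" "- W \<le> \<bar>Hf f x\<bar> * Q" by linarith+
      moreover have "0 \<le> u\<^sup>2" "u\<^sup>2 \<le> Q" using Qu by simp_all
      ultimately show ?thesis
        using \<open>A * u \<le> Q / 2\<close> \<open>- (A * u) \<le> Q / 2\<close> unfolding abs_le_iff distrib_right by linarith
    qed
    ultimately have "\<bar>u * (u\<^sup>2 - A * u - W)\<bar> \<le> sqrt Q * ((3 / 2 + \<bar>Hf f x\<bar>) * Q)"
      unfolding abs_mult using Q by (intro mult_mono) simp_all
    then have "\<bar>u * (u\<^sup>2 - A * u - W) / (Q * sqrt Q)\<bar> \<le> 3 / 2 + \<bar>Hf f x\<bar>"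
      using Q by (simp add: abs_divide divide_le_eq mult_ac)
    from divide_right_mono[OF this, of x] x show ?thesis
      unfolding eq by (simp add: abs_divide[of _ x] abs_mult)
  qed
qed

lemma abs_Hf_le:
  assumes "\<bar>f x * deriv (deriv f) x\<bar> \<le> B * (deriv f x)\<^sup>2"
  shows "\<bar>Hf f x\<bar> \<le> \<bar>B\<bar>"
proof -
  have "\<bar>f x * deriv (deriv f) x\<bar> \<le> \<bar>B\<bar> * (deriv f x)\<^sup>2"
    using assms abs_ge_self[of B] by (meson mult_right_mono order_trans zero_le_power2)
  then have "\<bar>x\<^sup>2 * f x * deriv (deriv f) x\<bar> \<le> x\<^sup>2 * (\<bar>B\<bar> * (deriv f x)\<^sup>2)"
    unfolding mult.assoc abs_mult[of "x\<^sup>2"] by (simp add: mult_left_mono)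
  also have "\<dots> \<le> \<bar>B\<bar> * ((f x)\<^sup>2 + x\<^sup>2 * (deriv f x)\<^sup>2)"
    by (simp add: algebra_simps)
  finally have N: "\<bar>x\<^sup>2 * f x * deriv (deriv f) x\<bar> \<le> \<bar>B\<bar> * ((f x)\<^sup>2 + x\<^sup>2 * (deriv f x)\<^sup>2)" .
  show ?thesis
  proof (cases "(f x)\<^sup>2 + x\<^sup>2 * (deriv f x)\<^sup>2 = 0")
    case False
    then have "(f x)\<^sup>2 + x\<^sup>2 * (deriv f x)\<^sup>2 > 0"
      using zero_le_power2[of "f x"] zero_le_power2[of x] zero_le_power2[of "deriv f x"]
      by (metis add_nonneg_nonneg mult_nonneg_nonneg order_le_neq_trans)
    with N show ?thesis
      unfolding Hf_def abs_divide by (simp add: pos_divide_le_eq)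
  qed (simp add: Hf_def)
qed

lemma abs_sigma_cond_le:
  assumes "x \<noteq> 0" "deriv f x \<noteq> 0"
  shows "\<bar>sigma_cond f x\<bar> \<le> \<bar>f x / deriv f x\<bar> / \<bar>x\<bar>"
proof -
  have pos: "\<bar>x\<bar> * \<bar>deriv f x\<bar> > 0" using assms by simp
  have le: "\<bar>x\<bar> * \<bar>deriv f x\<bar> \<le> sqrt ((f x)\<^sup>2 + x\<^sup>2 * (deriv f x)\<^sup>2)"
    by (intro real_le_rsqrt) (simp add: power_mult_distrib)
  with pos have "sqrt ((f x)\<^sup>2 + x\<^sup>2 * (deriv f x)\<^sup>2) > 0" by linarith
  with le have "\<bar>f x\<bar> / sqrt ((f x)\<^sup>2 + x\<^sup>2 * (deriv f x)\<^sup>2) \<le> \<bar>f x\<bar> / (\<bar>x\<bar> * \<bar>deriv f x\<bar>)"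
    using pos by (intro divide_left_mono) simp_all
  then show ?thesis
    by (simp add: sigma_cond_def abs_divide field_simps)
qed

lemma sigma_cond_tendsto_zero:
  assumes kappa: "((\<lambda>x. kappa f x) \<longlongrightarrow> \<infinity>) F" and nz: "\<forall>\<^sub>F x in F. x \<noteq> 0"
  shows "(sigma_cond f \<longlongrightarrow> 0) F"
proof (rule tendstoI)
  fix \<epsilon> :: real assume \<epsilon>: "\<epsilon> > 0"
  have "\<forall>\<^sub>F x in F. ereal (2 / \<epsilon>) < kappa f x"
    using kappa unfolding tendsto_PInfty by blast
  with nz show "\<forall>\<^sub>F x in F. dist (sigma_cond f x) 0 < \<epsilon>"
  proof eventually_elim
    case (elim x)
    show ?case
    proof (cases "f x = 0")
      case True
      then show ?thesis using \<epsilon> by (simp add: sigma_cond_def)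
    next
      case False
      define k where "k = \<bar>x\<bar> * \<bar>deriv f x\<bar> / \<bar>f x\<bar>"
      have k: "2 / \<epsilon> < k" using elim False by (simp add: kappa_def k_def)
      then have "2 < \<epsilon> * k" using \<epsilon> by (simp add: field_simps)
      moreover have "k > 0" using k \<epsilon> by (smt (verit) divide_pos_pos)
      moreover have "\<bar>sigma_cond f x\<bar> * (1 + k) \<le> 2"
        using sigma_cond_mu_bounds(2)[of x f] elim(1) False by (simp add: k_def)
      ultimately have "\<bar>sigma_cond f x\<bar> * (1 + k) < \<epsilon> * (1 + k)"
        using \<epsilon> by (simp add: algebra_simps)
      then show ?thesis using \<open>k > 0\<close> by simp
    qed
  qed
qed

section \<open>Real analytic functions on a half-line\<close>

context
  fixes f :: "real \<Rightarrow> real" and a :: real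
  assumes a_pos: "a > 0"
    and analytic: "real_analytic_on f {a<..}"
    and nonzero: "\<exists>x>a. f x \<noteq> 0"
begin

lemma halfline_not_locally_zero: "z > a \<Longrightarrow> \<not> (\<forall>\<^sub>F x in nhds z. f x = 0)"
  using real_analytic_on_not_locally_zero[OF analytic connected_Ioi] nonzero by auto

lemma halfline_zeros_isolated: "z > a \<Longrightarrow> \<forall>\<^sub>F x in at z. f x \<noteq> 0"
  using real_analytic_on_zeros_dichotomy[OF analytic] halfline_not_locally_zero by auto

lemma halfline_finite_zeros: "a < s \<Longrightarrow> finite ({s..t} \<inter> {x. f x = 0})"
  by (rule finite_not_islimpt_in_compact)
    (auto simp: islimpt_iff_eventually halfline_zeros_isolated)

lemma halfline_has_deriv:
  assumes "z > a"
  shows "(f has_real_derivative deriv f z) (at z)"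
    and "(deriv f has_real_derivative deriv (deriv f) z) (at z)"
  using assms real_analytic_on_has_deriv[OF analytic]
    real_analytic_on_has_deriv[OF real_analytic_on_deriv[OF analytic]]
  by simp_all

lemma halfline_Hf_locally_bounded:
  assumes z: "z > a"
  shows "\<exists>B. \<forall>\<^sub>F x in nhds z. \<bar>Hf f x\<bar> \<le> B"
proof (cases "f z = 0")
  case True
  then obtain B where "\<forall>\<^sub>F x in nhds z. \<bar>f x * deriv (deriv f) x\<bar> \<le> B * (deriv f x)\<^sup>2"
    using real_analytic_on_zero_local_behaviour(1)[OF analytic _ _ halfline_not_locally_zero] z
    by auto
  then have "\<forall>\<^sub>F x in nhds z. \<bar>Hf f x\<bar> \<le> \<bar>B\<bar>"
    by (elim eventually_mono) (rule abs_Hf_le)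
  then show ?thesis ..
next
  case False
  have "isCont (deriv (deriv f)) z"
    using z real_analytic_on_isCont[OF real_analytic_on_deriv[OF real_analytic_on_deriv[OF analytic]]]
    by simp
  moreover have "isCont f z" "isCont (deriv f) z"
    using halfline_has_deriv[OF z] by (simp_all add: DERIV_isCont)
  moreover have "(f z)\<^sup>2 + z\<^sup>2 * (deriv f z)\<^sup>2 \<noteq> 0"
    using False by (simp add: add_nonneg_eq_0_iff)
  ultimately have "isCont (Hf f) z"
    unfolding Hf_def[abs_def] by (auto intro!: continuous_intros)
  then have "(Hf f \<longlongrightarrow> Hf f z) (nhds z)"
    by (simp add: isCont_def tendsto_at_iff_tendsto_nhds)
  from order_tendstoD(2)[OF tendsto_rabs[OF this] less_add_one] show ?thesis
    by (intro exI[of _ "\<bar>Hf f z\<bar> + 1"]) (auto elim: eventually_mono)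
qed

lemma halfline_sigma_cond_isCont:
  assumes z: "z > a"
  shows "isCont (sigma_cond f) z"
proof (cases "f z = 0")
  case True
  have "z \<in> {a<..}" using z by simp
  note local =
    real_analytic_on_zero_local_behaviour[OF analytic this True halfline_not_locally_zero[OF z]]
  have "\<forall>\<^sub>F x in at z. x > a"
    using order_tendstoD(1)[OF tendsto_ident_at z] .
  with local(3) have "\<forall>\<^sub>F x in at z. norm (sigma_cond f x) \<le> norm (f x / deriv f x) * (1 / a)"
  proof eventually_elim
    case (elim x)
    with a_pos have "\<bar>sigma_cond f x\<bar> \<le> \<bar>f x / deriv f x\<bar> / x"
      using abs_sigma_cond_le[of x f] by simp
    also have "\<dots> \<le> \<bar>f x / deriv f x\<bar> / a"
      using elim a_pos by (intro divide_left_mono) auto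
    finally show ?case by simp
  qed
  from tendsto_0_le[OF local(2) this]
  have "sigma_cond f \<midarrow>z\<rightarrow> 0"
    using z by simp
  then show ?thesis
    using True by (simp add: isCont_def sigma_cond_def)
next
  case False
  show ?thesis
    using sigma_cond_has_deriv[OF False halfline_has_deriv[OF z]] by (rule DERIV_isCont)
qed

lemma halfline_sigma_cond_log_lipschitz:
  assumes M: "\<And>x. x > a \<Longrightarrow> \<bar>Hf f x\<bar> \<le> M" and s: "a < s" and st: "s \<le> t"
  shows "\<bar>sigma_cond f t - sigma_cond f s\<bar> \<le> (3 / 2 + M) * (ln t - ln s)"
proof (rule abs_diff_le_ln_ratio_if_deriv_bound[OF _ st halfline_finite_zeros[OF s]])
  show "0 < s" using s a_pos by simp
  show "continuous_on {s..t} (sigma_cond f)"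
    using s by (intro continuous_at_imp_continuous_on ballI halfline_sigma_cond_isCont) auto
  show "(sigma_cond f has_real_derivative sigma_cond_deriv f x) (at x)"
    if "x \<in> {s..t} - {s..t} \<inter> {x. f x = 0}" for x
    using that s by (intro sigma_cond_has_deriv halfline_has_deriv) auto
  show "\<bar>sigma_cond_deriv f x\<bar> \<le> (3 / 2 + M) / x" if "x \<in> {s..t}" for x
  proof -
    have x: "x > a" "x > 0" using that s a_pos by auto
    have "\<bar>sigma_cond_deriv f x\<bar> \<le> (3 / 2 + \<bar>Hf f x\<bar>) / x"
      by (rule abs_sigma_cond_deriv_le[OF x(2)])
    also have "\<dots> \<le> (3 / 2 + M) / x"
      using M[OF x(1)] x(2) by (simp add: divide_right_mono)
    finally show ?thesis .
  qed
qed

lemma halfline_abs_sigma_cond_le_ln: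
  assumes kappa_left: "((\<lambda>x. kappa f x) \<longlongrightarrow> \<infinity>) (at_right a)"
    and M: "\<And>x. x > a \<Longrightarrow> \<bar>Hf f x\<bar> \<le> M" and x: "x > a"
  shows "\<bar>sigma_cond f x\<bar> \<le> (3 / 2 + M) * (ln x - ln a)"
proof -
  define K where "K = 3 / 2 + M"
  have "\<forall>\<^sub>F y in at_right a. y \<noteq> 0"
    using eventually_at_right_less[of a] a_pos by (auto elim: eventually_mono)
  then have "(sigma_cond f \<longlongrightarrow> 0) (at_right a)"
    by (rule sigma_cond_tendsto_zero[OF kappa_left])
  then have "((\<lambda>y. \<bar>sigma_cond f y\<bar> + K * (ln x - ln y)) \<longlongrightarrow> \<bar>0\<bar> + K * (ln x - ln a)) (at_right a)"
    using a_pos by (intro tendsto_intros) auto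
  moreover have "\<forall>\<^sub>F y in at_right a. \<bar>sigma_cond f x\<bar> \<le> \<bar>sigma_cond f y\<bar> + K * (ln x - ln y)"
    using eventually_at_right_real[OF x]
  proof (rule eventually_mono)
    fix y assume "y \<in> {a<..<x}"
    then have "\<bar>sigma_cond f x - sigma_cond f y\<bar> \<le> K * (ln x - ln y)"
      unfolding K_def by (intro halfline_sigma_cond_log_lipschitz M) auto
    then show "\<bar>sigma_cond f x\<bar> \<le> \<bar>sigma_cond f y\<bar> + K * (ln x - ln y)"
      by linarith
  qed
  ultimately show ?thesis
    using tendsto_le[OF trivial_limit_at_right_real _ tendsto_const] by (simp add: K_def)
qed

end

lemma sigma_cond_log_lipschitz_mu_estimate:
  fixes f :: "real \<Rightarrow> real"
  assumes a: "a > 0" and K: "K > 0"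
    and lip: "\<And>s t. a < s \<Longrightarrow> s \<le> t \<Longrightarrow> \<bar>sigma_cond f t - sigma_cond f s\<bar> \<le> K * (ln t - ln s)"
    and bound: "\<And>x. a < x \<Longrightarrow> \<bar>sigma_cond f x\<bar> \<le> K * (ln x - ln a)"
    and x: "x > a" "f x \<noteq> 0" and y: "y > 0"
    and close: "2 * K * \<bar>ln y - ln x\<bar> * (1 + x * \<bar>deriv f x\<bar> / \<bar>f x\<bar>) < 1"
  shows "y > a" and "f y \<noteq> 0"
    and "1 + y * \<bar>deriv f y\<bar> / \<bar>f y\<bar> < 4 * (1 + x * \<bar>deriv f x\<bar> / \<bar>f x\<bar>)"
proof -
  define m where "m = 1 + x * \<bar>deriv f x\<bar> / \<bar>f x\<bar>"
  define d where "d = \<bar>ln y - ln x\<bar>"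
  have x0: "x > 0" using x a by simp
  have m: "m \<ge> 1" using x0 by (simp add: m_def)
  have sm: "1 \<le> \<bar>sigma_cond f x\<bar> * m"
    using sigma_cond_mu_bounds(1)[of x f] x0 x(2) by (simp add: m_def)
  have Kdm: "K * d * m < 1 / 2"
    using close by (simp add: m_def d_def mult_ac)
  show ya: "y > a"
  proof (rule ccontr)
    assume "\<not> y > a"
    then have "ln y \<le> ln a"
      using y by simp
    then have "ln x - ln a \<le> d"
      unfolding d_def by linarith
    then have "K * (ln x - ln a) * m \<le> K * d * m"
      using K m by (simp add: mult_right_mono)
    moreover have "\<bar>sigma_cond f x\<bar> * m \<le> K * (ln x - ln a) * m"
      using bound[OF x(1)] m by (simp add: mult_right_mono)
    ultimately show False
      using sm Kdm by linarith
  qed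
  have "\<bar>sigma_cond f x - sigma_cond f y\<bar> \<le> K * d"
  proof (cases "y \<le> x")
    case True
    then show ?thesis using lip[OF ya True] y by (simp add: d_def)
  next
    case False
    then show ?thesis using lip[OF x(1), of y] x0 by (simp add: d_def abs_minus_commute)
  qed
  then have "(\<bar>sigma_cond f x\<bar> - K * d) * m \<le> \<bar>sigma_cond f y\<bar> * m"
    using m by (intro mult_right_mono) auto
  then have sy: "1 / 2 < \<bar>sigma_cond f y\<bar> * m"
    using sm Kdm by (simp add: algebra_simps)
  then show fy: "f y \<noteq> 0"
    by (auto simp: sigma_cond_def)
  have "\<bar>sigma_cond f y\<bar> * (1 + y * \<bar>deriv f y\<bar> / \<bar>f y\<bar>) \<le> 2"
    using sigma_cond_mu_bounds(2)[of y f] y fy by simp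
  also have "\<dots> < \<bar>sigma_cond f y\<bar> * (4 * m)"
    using sy by (simp add: mult_ac)
  finally show "1 + y * \<bar>deriv f y\<bar> / \<bar>f y\<bar> < 4 * (1 + x * \<bar>deriv f x\<bar> / \<bar>f x\<bar>)"
    unfolding m_def by (simp add: mult_less_cancel_left)
qed

section \<open>Amenability\<close>

lemma reldist_less_ereal_imp:
  assumes x: "x > 0" and r: "reldist y x < ereal r"
  shows "y > 0" and "\<bar>ln y - ln x\<bar> < r"
proof -
  have "y * x > 0"
    using x r by (auto simp: reldist_def split: if_splits)
  then show y: "y > 0" using x by (simp add: zero_less_mult_iff)
  show "\<bar>ln y - ln x\<bar> < r"
    using r x y by (simp add: reldist_def ln_div abs_minus_commute)
qed

lemma amenable_if_sigma_cond_log_lipschitz: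
  fixes f :: "real \<Rightarrow> real"
  assumes a: "a > 0" and K: "K > 0"
    and lip: "\<And>s t. a < s \<Longrightarrow> s \<le> t \<Longrightarrow> \<bar>sigma_cond f t - sigma_cond f s\<bar> \<le> K * (ln t - ln s)"
    and bound: "\<And>x. a < x \<Longrightarrow> \<bar>sigma_cond f x\<bar> \<le> K * (ln x - ln a)"
  shows "amenable f {a<..}"
proof -
  \<comment> \<open>\<open>2 K\<close>: sigma_cond keeps half its size on the ball;
    \<open>4\<close>: twice the factor 2 of sigma_cond_mu_bounds\<close>
  define C where "C = max 4 (2 * K)"
  have C: "C > 0" "C \<ge> 4" "C \<ge> 2 * K" by (simp_all add: C_def)
  have "y > a \<and> mu f y \<le> ereal C * mu f x"
    if x: "x > a" and kx: "kappa f x < \<infinity>" and ry: "reldist y x < 1 / (ereal C * mu f x)" for x y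
  proof -
    define m where "m = 1 + x * \<bar>deriv f x\<bar> / \<bar>f x\<bar>"
    have x0: "x > 0" using x a by simp
    have fx: "f x \<noteq> 0" using kx x0 by (auto simp: kappa_def)
    have m: "m \<ge> 1" using x0 by (simp add: m_def)
    have mux: "mu f x = ereal m" using mu_eq_real[of x f] fx x0 by (simp add: m_def)
    have "1 / (ereal C * mu f x) = ereal (1 / (C * m))"
      using C m by (simp add: mux one_ereal_def)
    with ry have "reldist y x < ereal (1 / (C * m))" by simp
    note y0 = reldist_less_ereal_imp(1)[OF x0 this] and d = reldist_less_ereal_imp(2)[OF x0 this]
    from d have "C * \<bar>ln y - ln x\<bar> * m < 1"
      using C m by (simp add: field_simps)
    moreover have "2 * K * \<bar>ln y - ln x\<bar> * m \<le> C * \<bar>ln y - ln x\<bar> * m"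
      using C m by (intro mult_right_mono) auto
    ultimately have close: "2 * K * \<bar>ln y - ln x\<bar> * m < 1" by linarith
    note estimate =
      sigma_cond_log_lipschitz_mu_estimate[OF a K lip bound x fx y0 close[unfolded m_def]]
    have "mu f y = ereal (1 + y * \<bar>deriv f y\<bar> / \<bar>f y\<bar>)"
      using mu_eq_real[of y f] estimate(2) y0 by simp
    also have "\<dots> \<le> ereal (C * m)"
    proof -
      have "1 + y * \<bar>deriv f y\<bar> / \<bar>f y\<bar> < 4 * m"
        using estimate(3) by (simp add: m_def)
      also have "4 * m \<le> C * m"
        using C m by (intro mult_right_mono) auto
      finally show ?thesis by simp
    qed
    finally show ?thesis
      using estimate(1) by (simp add: mux)
  qed
  then show ?thesis
    unfolding amenable_def Let_def using C(1) by (intro exI[of _ C]) auto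
qed

theorem proposition2:
  fixes f :: "real \<Rightarrow> real" and a :: real
  assumes a_pos: "a > 0"
    and analytic: "real_analytic_on f {a<..}"
    and nonzero: "\<exists>x>a. f x \<noteq> 0"
    and kappa_left: "((\<lambda>x. kappa f x) \<longlongrightarrow> \<infinity>) (at_right a)"
    and kappa_seq: "\<And>xs :: nat \<Rightarrow> real.
           (\<forall>j. xs j > a) \<Longrightarrow> filterlim xs at_top sequentially \<Longrightarrow>
           ((\<lambda>j. reldist_set (xs j) {x\<in>{a<..}. f x = 0}) \<longlonglongrightarrow> 0) \<Longrightarrow>
           ((\<lambda>j. kappa f (xs j)) \<longlonglongrightarrow> \<infinity>)"
    and H_bound: "\<exists>C>0. Limsup (at_right a) (\<lambda>x. ereal \<bar>Hf f x\<bar>) \<le> ereal C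
                      \<and> Limsup at_top (\<lambda>x. ereal \<bar>Hf f x\<bar>) \<le> ereal C"
  shows "amenable f {a<..}"
proof -
  obtain C where C: "Limsup (at_right a) (\<lambda>x. ereal \<bar>Hf f x\<bar>) \<le> ereal C"
    "Limsup at_top (\<lambda>x. ereal \<bar>Hf f x\<bar>) \<le> ereal C"
    using H_bound by blast
  obtain M where M: "\<And>x. x > a \<Longrightarrow> \<bar>Hf f x\<bar> \<le> M"
    using bounded_on_Ioi_if_locally_bounded[OF
        halfline_Hf_locally_bounded[OF a_pos analytic nonzero] C]
    by blast
  have K: "3 / 2 + M > 0"
    using M[of "a + 1"] by linarith
  show ?thesis
    using amenable_if_sigma_cond_log_lipschitz[OF a_pos K]
      halfline_sigma_cond_log_lipschitz[OF a_pos analytic nonzero M]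
      halfline_abs_sigma_cond_le_ln[OF a_pos analytic nonzero kappa_left M]
    by blast
qed

end
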